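(* Let $\mathcal{M}$ be either $\mathcal{M}^{gen}$ or $\mathcal{M}^{inj}$, let $\Omega$ be a finite collection of finite metric spaces, and let $\mathfrak{C}=\mathfrak{C}^\Omega$ be the clustering functor on $\mathcal{M}$ represented by $\Omega$. Then $\mathfrak{C}=\mathfrak{R}_1\circ\mathfrak{T}^\Omega$; that is, for every finite metric space $(X,d_X)$, two points $x,x'\in X$ lie in the same block of $\mathfrak{C}^\Omega(X,d_X)$ if and only if there exist $x_0,\ldots,x_k\in X$ with $x_0=x$, $x_k=x'$ and $d_X^\Omega(x_i,x_{i+1})\leq 1$ for all $i$.
   Context: $\mathcal{M}^{gen}$ is the category whose objects are finite metric spaces and whose morphisms are distance non-increasing maps ($d_Y(f(x),f(x'))\leq d_X(x,x')$); $\mathcal{M}^{inj}$ has the same objects and as morphisms the injective distance non-increasing maps. For a collection $\Omega$ of finite metric spaces, $\mathfrak{C}^\Omega$ assigns to a finite metric space $X$ the partition in which $x,x'$ lie in the same block iff there exist $z_0,\ldots,z_k\in X$ with $z_0=x$, $z_k=x'$, spaces $\omega_1,\ldots,\omega_k\in\Omega$, points $\alpha_i,\beta_i\in\omega_i$ and morphisms $f_i\in\mathrm{Mor}_{\mathcal{M}}(\omega_i,X)$ with $f_i(\alpha_i)=z_{i-1}$, $f_i(\beta_i)=z_i$. For $\lambda>0$, $\lambda\cdot\omega$ denotes $(\omega,\lambda d_\omega)$. Define $W_X^\Omega:X\times X\to[0,+\infty]$ by $W_X^\Omega(x,x)=0$ and, for $x\neq x'$, $W_X^\Omega(x,x')=\inf\{\lambda>0:\exists\,\omega\in\Omega,\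 \phi\in\mathrm{Mor}_{\mathcal{M}}(\lambda\cdot\omega,X)\text{ with }\{x,x'\}\subset\mathrm{im}(\phi)\}$ (infimum of the empty set is $+\infty$). Define $d_X^\Omega(x,x')=\min\{\max_i W_X^\Omega(x_i,x_{i+1}):x_0=x,\ldots,x_k=x'\text{ in }X\}$ (the maximal subdominant ultrametric of $W_X^\Omega$); $\mathfrak{T}^\Omega(X,d_X)=(X,d_X^\Omega)$. $\mathfrak{R}_1$ assigns to a (possibly extended) metric space the partition into equivalence classes of chains with consecutive distances $\leq 1$. *)

theory Defs
  imports "HOL-Library.Extended_Real"
begin

definition fin_metric :: "'a set \<Rightarrow> ('a \<Rightarrow> 'a \<Rightarrow> real) \<Rightarrow> bool" where
  "fin_metric S d \<longleftrightarrow> finite S \<and>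
     (\<forall>x\<in>S. \<forall>y\<in>S. d x y \<ge> 0 \<and> (d x y = 0 \<longleftrightarrow> x = y) \<and> d x y = d y x) \<and>
     (\<forall>x\<in>S. \<forall>y\<in>S. \<forall>z\<in>S. d x z \<le> d x y + d y z)"

text \<open>Morphisms of M^gen (inj = False) or M^inj (inj = True): distance non-increasing maps,
  additionally injective in the case of M^inj.\<close>

definition is_mor :: "bool \<Rightarrow> 'b set \<Rightarrow> ('b \<Rightarrow> 'b \<Rightarrow> real) \<Rightarrow> 'a set \<Rightarrow> ('a \<Rightarrow> 'a \<Rightarrow> real)
                      \<Rightarrow> ('b \<Rightarrow> 'a) \<Rightarrow> bool" where
  "is_mor use_inj S dS X dX f \<longleftrightarrow> f ` S \<subseteq> X \<and>
     (\<forall>x\<in>S. \<forall>y\<in>S. dX (f x) (f y) \<le> dS x y) \<and> (use_inj \<longrightarrow> inj_on f S)"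

definition chain_rel :: "'a set \<Rightarrow> ('a \<Rightarrow> 'a \<Rightarrow> bool) \<Rightarrow> 'a \<Rightarrow> 'a \<Rightarrow> bool" where
  "chain_rel X R x x' \<longleftrightarrow> (\<exists>zs. zs \<noteq> [] \<and> hd zs = x \<and> last zs = x' \<and> set zs \<subseteq> X \<and>
     (\<forall>i < length zs - 1. R (zs ! i) (zs ! Suc i)))"

definition clust_same_block :: "bool \<Rightarrow> ('b set \<times> ('b \<Rightarrow> 'b \<Rightarrow> real)) set \<Rightarrow> 'a set
     \<Rightarrow> ('a \<Rightarrow> 'a \<Rightarrow> real) \<Rightarrow> 'a \<Rightarrow> 'a \<Rightarrow> bool" where
  "clust_same_block use_inj \<Omega> X d x x' \<longleftrightarrow> x \<in> X \<and> x' \<in> X \<and>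
     chain_rel X (\<lambda>z z'. \<exists>\<omega>\<in>\<Omega>. \<exists>\<alpha>\<in>fst \<omega>. \<exists>\<beta>\<in>fst \<omega>. \<exists>f.
        is_mor use_inj (fst \<omega>) (snd \<omega>) X d f \<and> f \<alpha> = z \<and> f \<beta> = z') x x'"

text \<open>W^Omega_X, valued in [0, +infinity] (Inf of the empty set is +infinity in ereal).\<close>

definition W_Omega :: "bool \<Rightarrow> ('b set \<times> ('b \<Rightarrow> 'b \<Rightarrow> real)) set \<Rightarrow> 'a set
     \<Rightarrow> ('a \<Rightarrow> 'a \<Rightarrow> real) \<Rightarrow> 'a \<Rightarrow> 'a \<Rightarrow> ereal" where
  "W_Omega use_inj \<Omega> X d x x' = (if x = x' then 0 else
     Inf {ereal lam | lam. lam > 0 \<and> (\<exists>\<omega>\<in>\<Omega>. \<exists>\<phi>.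
        is_mor use_inj (fst \<omega>) (\<lambda>a b. lam * snd \<omega> a b) X d \<phi> \<and> x \<in> \<phi> ` fst \<omega> \<and> x' \<in> \<phi> ` fst \<omega>)})"

text \<open>d^Omega_X: maximal subdominant ultrametric of W (min over chains of max of W along the chain;
  a chain of length 0 gives 0).\<close>

definition d_Omega :: "bool \<Rightarrow> ('b set \<times> ('b \<Rightarrow> 'b \<Rightarrow> real)) set \<Rightarrow> 'a set
     \<Rightarrow> ('a \<Rightarrow> 'a \<Rightarrow> real) \<Rightarrow> 'a \<Rightarrow> 'a \<Rightarrow> ereal" where
  "d_Omega use_inj \<Omega> X d x x' = Inf {Max (insert 0 {W_Omega use_inj \<Omega> X d (zs ! i) (zs ! Suc i) | i. i < length zs - 1})
       | zs. zs \<noteq> [] \<and> hd zs = x \<and> last zs = x' \<and> set zs \<subseteq> X}"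

end

theory Submission
  imports Defs
begin

text \<open>Since \<open>\<Omega>\<close> and \<open>X\<close> are finite, the ratios \<open>d\<^sub>X(\<phi> p, \<phi> q) / d\<^sub>\<omega>(p, q)\<close> that exceed \<open>1\<close>
  are bounded away from \<open>1\<close>. Hence a scaled morphism \<open>\<lambda>\<cdot>\<omega> \<rightarrow> X\<close> with \<open>\<lambda>\<close> close to \<open>1\<close> is already
  a morphism \<open>\<omega> \<rightarrow> X\<close>, so \<open>W\<^sup>\<Omega>(x, x') \<le> 1\<close> exactly when \<open>x = x'\<close> or some morphism from some
  \<open>\<omega> \<in> \<Omega>\<close> has \<open>x, x'\<close> in its image. The minimum defining \<open>d\<^sup>\<Omega>\<close> ranges over the finitely
  many values of \<open>W\<^sup>\<Omega>\<close> on \<open>X \<times> X\<close>, so it is attained, and \<open>d\<^sup>\<Omega>(x, x') \<le> 1\<close> means that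
  \<open>x, x'\<close> are joined by a chain with \<open>W\<^sup>\<Omega> \<le> 1\<close> on consecutive points. Both sides of the theorem
  therefore describe the same equivalence relation, generated by the images of the \<open>\<omega> \<in> \<Omega>\<close>.\<close>

definition restrict_rel :: "'a set \<Rightarrow> ('a \<Rightarrow> 'a \<Rightarrow> bool) \<Rightarrow> 'a rel" where
  "restrict_rel X R = {(a, b). a \<in> X \<and> b \<in> X \<and> R a b}"

lemma chain_rel_refl: "x \<in> X \<Longrightarrow> chain_rel X R x x"
  unfolding chain_rel_def by (intro exI[of _ "[x]"]) auto

lemma chain_rel_Cons:
  assumes "x \<in> X" "R x y" "chain_rel X R y z"
  shows "chain_rel X R x z"
proof -
  obtain zs where zs: "zs \<noteq> []" "hd zs = y" "last zs = z" "set zs \<subseteq> X"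
    "\<forall>i < length zs - 1. R (zs ! i) (zs ! Suc i)"
    using assms(3) unfolding chain_rel_def by blast
  have "\<forall>i < length (x # zs) - 1. R ((x # zs) ! i) ((x # zs) ! Suc i)"
    using zs(1,2,5) assms(2) by (auto simp: hd_conv_nth nth_Cons split: nat.split)
  then show ?thesis
    unfolding chain_rel_def using zs assms(1) by (intro exI[of _ "x # zs"]) auto
qed

lemma chain_list_in_rtrancl:
  assumes "zs \<noteq> []" "set zs \<subseteq> X" "\<forall>i < length zs - 1. R (zs ! i) (zs ! Suc i)"
  shows "(hd zs, last zs) \<in> (restrict_rel X R)\<^sup>*"
  using assms
proof (induction zs rule: list_nonempty_induct)
  case (single x)
  then show ?case by simp
next
  case (cons x zs)
  have "R x (hd zs)"
    using cons.prems(2)[rule_format, of 0] cons.hyps by (simp add: hd_conv_nth)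
  then have "(x, hd zs) \<in> restrict_rel X R"
    using cons.prems(1) cons.hyps unfolding restrict_rel_def by auto
  moreover have "\<forall>i < length zs - 1. R (zs ! i) (zs ! Suc i)"
  proof (intro allI impI)
    fix i assume "i < length zs - 1"
    then show "R (zs ! i) (zs ! Suc i)"
      using cons.prems(2)[rule_format, of "Suc i"] by simp
  qed
  then have "(hd zs, last zs) \<in> (restrict_rel X R)\<^sup>*"
    using cons.IH cons.prems(1) by simp
  ultimately show ?case
    using cons.hyps by simp
qed

lemma chain_rel_iff_rtrancl:
  "chain_rel X R x x' \<longleftrightarrow> x \<in> X \<and> x' \<in> X \<and> (x, x') \<in> (restrict_rel X R)\<^sup>*"
proof
  assume "chain_rel X R x x'"
  then obtain zs where zs: "zs \<noteq> []" "hd zs = x" "last zs = x'" "set zs \<subseteq> X"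
    "\<forall>i < length zs - 1. R (zs ! i) (zs ! Suc i)"
    unfolding chain_rel_def by blast
  then show "x \<in> X \<and> x' \<in> X \<and> (x, x') \<in> (restrict_rel X R)\<^sup>*"
    using chain_list_in_rtrancl[OF zs(1,4,5)] by auto
next
  assume "x \<in> X \<and> x' \<in> X \<and> (x, x') \<in> (restrict_rel X R)\<^sup>*"
  then have "(x, x') \<in> (restrict_rel X R)\<^sup>*" "x' \<in> X" by auto
  then show "chain_rel X R x x'"
    by (induction rule: converse_rtrancl_induct)
      (auto simp: restrict_rel_def intro: chain_rel_refl chain_rel_Cons)
qed

lemma chain_rel_rtrancl_mono:
  assumes "chain_rel X R x x'"
    and "\<And>a b. a \<in> X \<Longrightarrow> b \<in> X \<Longrightarrow> R a b \<Longrightarrow> (a, b) \<in> (restrict_rel X S)\<^sup>*"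
  shows "chain_rel X S x x'"
proof -
  have "restrict_rel X R \<subseteq> (restrict_rel X S)\<^sup>*"
    using assms(2) unfolding restrict_rel_def by auto
  then show ?thesis
    using assms(1) rtrancl_subset_rtrancl unfolding chain_rel_iff_rtrancl by blast
qed

definition omega_linked :: "bool \<Rightarrow> ('b set \<times> ('b \<Rightarrow> 'b \<Rightarrow> real)) set \<Rightarrow> 'a set
     \<Rightarrow> ('a \<Rightarrow> 'a \<Rightarrow> real) \<Rightarrow> 'a \<Rightarrow> 'a \<Rightarrow> bool" where
  "omega_linked use_inj \<Omega> X d z z' \<longleftrightarrow> (\<exists>\<omega>\<in>\<Omega>. \<exists>\<alpha>\<in>fst \<omega>. \<exists>\<beta>\<in>fst \<omega>. \<exists>f.
     is_mor use_inj (fst \<omega>) (snd \<omega>) X d f \<and> f \<alpha> = z \<and> f \<beta> = z')"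

lemma clust_same_block_iff_chain_rel:
  "clust_same_block use_inj \<Omega> X d x x' \<longleftrightarrow> chain_rel X (omega_linked use_inj \<Omega> X d) x x'"
  unfolding clust_same_block_def omega_linked_def[abs_def] chain_rel_iff_rtrancl by auto

lemma W_Omega_le_1_if_linked:
  assumes "omega_linked use_inj \<Omega> X d a b"
  shows "W_Omega use_inj \<Omega> X d a b \<le> 1"
proof (cases "a = b")
  case False
  obtain \<omega> \<alpha> \<beta> f where \<omega>: "\<omega> \<in> \<Omega>" "\<alpha> \<in> fst \<omega>" "\<beta> \<in> fst \<omega>"
    "is_mor use_inj (fst \<omega>) (snd \<omega>) X d f" "f \<alpha> = a" "f \<beta> = b"
    using assms unfolding omega_linked_def by blast
  have "ereal 1 \<in> {ereal lam | lam. lam > 0 \<and> (\<exists>\<omega>\<in>\<Omega>. \<exists>\<phi>.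
        is_mor use_inj (fst \<omega>) (\<lambda>a b. lam * snd \<omega> a b) X d \<phi> \<and> a \<in> \<phi> ` fst \<omega> \<and> b \<in> \<phi> ` fst \<omega>)}"
    using \<omega> by (intro CollectI exI[of _ 1]) (auto intro!: bexI[of _ \<omega>] exI[of _ f])
  then show ?thesis
    using False unfolding W_Omega_def by (simp add: Inf_lower one_ereal_def)
qed (simp add: W_Omega_def)

lemma d_Omega_le_W_Omega:
  assumes "a \<in> X" "b \<in> X"
  shows "d_Omega use_inj \<Omega> X d a b \<le> max 0 (W_Omega use_inj \<Omega> X d a b)"
proof -
  let ?W = "W_Omega use_inj \<Omega> X d"
  have "{?W ([a, b] ! i) ([a, b] ! Suc i) | i. i < length [a, b] - 1} = {?W a b}"
    by auto
  then have "max 0 (?W a b) \<in> {Max (insert 0 {?W (zs ! i) (zs ! Suc i) | i. i < length zs - 1})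
       | zs. zs \<noteq> [] \<and> hd zs = a \<and> last zs = b \<and> set zs \<subseteq> X}"
    using assms by (intro CollectI exI[of _ "[a, b]"]) auto
  then show ?thesis
    unfolding d_Omega_def by (rule Inf_lower)
qed

lemma chain_rel_W_Omega_if_d_Omega_le:
  assumes "d_Omega use_inj \<Omega> X d a b \<le> t" "a \<in> X" "b \<in> X" "finite X"
  shows "chain_rel X (\<lambda>p q. W_Omega use_inj \<Omega> X d p q \<le> t) a b"
proof -
  define W where "W = W_Omega use_inj \<Omega> X d"
  define steps where "steps zs = insert 0 {W (zs ! i) (zs ! Suc i) | i. i < length zs - 1}" for zs
  define S where "S = {Max (steps zs) | zs. zs \<noteq> [] \<and> hd zs = a \<and> last zs = b \<and> set zs \<subseteq> X}"
  have steps_eq: "steps zs = insert 0 ((\<lambda>i. W (zs ! i) (zs ! Suc i)) ` {..<length zs - 1})" for zs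
    unfolding steps_def by auto
  have steps_X: "steps zs \<subseteq> insert 0 (case_prod W ` (X \<times> X))" if "set zs \<subseteq> X" for zs
    using that unfolding steps_eq by (auto intro!: imageI nth_mem simp: subset_iff)
  have "S \<subseteq> insert 0 (case_prod W ` (X \<times> X))"
    unfolding S_def using steps_X Max_in[of "steps _"] by (force simp: steps_eq)
  then have "finite S"
    by (rule finite_subset) (use assms(4) in simp)
  moreover have "S \<noteq> {}"
    unfolding S_def using assms(2,3) by (auto intro!: exI[of _ "[a, b]"])
  ultimately have "Inf S \<in> S"
    using Min_Inf Min_in by metis
  moreover have "Inf S \<le> t"
    using assms(1) unfolding d_Omega_def S_def steps_def W_def .
  ultimately obtain zs where zs: "zs \<noteq> []" "hd zs = a" "last zs = b" "set zs \<subseteq> X"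
    "Max (steps zs) \<le> t"
    unfolding S_def by auto
  have "W (zs ! i) (zs ! Suc i) \<le> t" if "i < length zs - 1" for i
    using that zs(5) unfolding steps_eq by (auto intro: order_trans[rotated])
  then show ?thesis
    unfolding chain_rel_def W_def using zs(1-4) by blast
qed

lemma scaled_mor_ratio_witness:
  assumes "is_mor use_inj S (\<lambda>a b. lam * dS a b) X d \<phi>" "\<not> is_mor use_inj S dS X d \<phi>"
    and "fin_metric S dS"
  obtains p q where "p \<in> S" "q \<in> S" "\<phi> p \<in> X" "\<phi> q \<in> X" "0 < dS p q" "dS p q < d (\<phi> p) (\<phi> q)"
    "d (\<phi> p) (\<phi> q) / dS p q \<le> lam"
proof -
  obtain p q where pq: "p \<in> S" "q \<in> S" "dS p q < d (\<phi> p) (\<phi> q)"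
    using assms(1,2) unfolding is_mor_def by force
  have le: "d (\<phi> p) (\<phi> q) \<le> lam * dS p q" and img: "\<phi> p \<in> X" "\<phi> q \<in> X"
    using assms(1) pq unfolding is_mor_def by auto
  have "0 < dS p q"
    using assms(3) pq le unfolding fin_metric_def
    by (metis linorder_not_less mult_zero_right order.order_iff_strict)
  with pq le img that show ?thesis
    by (simp add: divide_le_eq)
qed

lemma finite_ratio_gap:
  assumes "finite \<Omega>" "\<forall>\<omega>\<in>\<Omega>. finite (fst \<omega>)" "finite X"
  obtains m :: real where "m > 1"
    "\<And>\<omega> p q u v. \<omega> \<in> \<Omega> \<Longrightarrow> p \<in> fst \<omega> \<Longrightarrow> q \<in> fst \<omega> \<Longrightarrow> u \<in> X \<Longrightarrow> v \<in> X \<Longrightarrow>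
       0 < snd \<omega> p q \<Longrightarrow> snd \<omega> p q < d u v \<Longrightarrow> m \<le> d u v / snd \<omega> p q"
proof -
  define D where "D = {(u, v, \<omega>, p, q). u \<in> X \<and> v \<in> X \<and> \<omega> \<in> \<Omega> \<and> p \<in> fst \<omega> \<and> q \<in> fst \<omega> \<and>
      0 < snd \<omega> p q \<and> snd \<omega> p q < d u v}"
  define F where "F = (\<lambda>(u, v, \<omega>, p, q). d u v / snd \<omega> p q) ` D"
  have "D \<subseteq> X \<times> X \<times> (SIGMA \<omega>:\<Omega>. fst \<omega> \<times> fst \<omega>)"
    unfolding D_def by auto
  then have "finite D"
    by (rule finite_subset) (use assms in \<open>auto intro!: finite_cartesian_product finite_SigmaI\<close>)
  then have "finite F"
    unfolding F_def by simp
  moreover have "y > 1" if "y \<in> F" for y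
    using that unfolding F_def D_def by auto
  ultimately have "Min (insert 2 F) > 1"
    by simp
  moreover have "Min (insert 2 F) \<le> d u v / snd \<omega> p q"
    if "\<omega> \<in> \<Omega>" "p \<in> fst \<omega>" "q \<in> fst \<omega>" "u \<in> X" "v \<in> X" "0 < snd \<omega> p q" "snd \<omega> p q < d u v"
    for \<omega> p q u v
  proof -
    have "d u v / snd \<omega> p q \<in> F"
      unfolding F_def D_def by (rule image_eqI[of _ _ "(u, v, \<omega>, p, q)"]) (use that in auto)
    then show ?thesis
      using \<open>finite F\<close> by simp
  qed
  ultimately show ?thesis
    using that by blast
qed

lemma linked_if_W_Omega_le_1:
  assumes "W_Omega use_inj \<Omega> X d a b \<le> 1" "a \<noteq> b"
    and "finite \<Omega>" "\<forall>\<omega>\<in>\<Omega>. fin_metric (fst \<omega>) (snd \<omega>)" "finite X"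
  shows "omega_linked use_inj \<Omega> X d a b"
proof (rule ccontr)
  assume not_linked: "\<not> omega_linked use_inj \<Omega> X d a b"
  obtain m :: real where "m > 1" and m_le:
    "\<And>\<omega> p q u v. \<omega> \<in> \<Omega> \<Longrightarrow> p \<in> fst \<omega> \<Longrightarrow> q \<in> fst \<omega> \<Longrightarrow> u \<in> X \<Longrightarrow> v \<in> X \<Longrightarrow>
       0 < snd \<omega> p q \<Longrightarrow> snd \<omega> p q < d u v \<Longrightarrow> m \<le> d u v / snd \<omega> p q"
    using finite_ratio_gap[of \<Omega> X d] assms(3-5) unfolding fin_metric_def by blast
  have "ereal m \<le> W_Omega use_inj \<Omega> X d a b"
    unfolding W_Omega_def using assms(2)
  proof (simp, intro Inf_greatest)
    fix t assume "t \<in> {ereal lam | lam. lam > 0 \<and> (\<exists>\<omega>\<in>\<Omega>. \<exists>\<phi>.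
      is_mor use_inj (fst \<omega>) (\<lambda>a b. lam * snd \<omega> a b) X d \<phi> \<and> a \<in> \<phi> ` fst \<omega> \<and> b \<in> \<phi> ` fst \<omega>)}"
    then obtain lam \<omega> \<phi> where t: "t = ereal lam" "\<omega> \<in> \<Omega>"
      "is_mor use_inj (fst \<omega>) (\<lambda>a b. lam * snd \<omega> a b) X d \<phi>" "a \<in> \<phi> ` fst \<omega>" "b \<in> \<phi> ` fst \<omega>"
      by blast
    have "\<not> is_mor use_inj (fst \<omega>) (snd \<omega>) X d \<phi>"
      using not_linked t(2,4,5) unfolding omega_linked_def by blast
    then obtain p q where "p \<in> fst \<omega>" "q \<in> fst \<omega>" "\<phi> p \<in> X" "\<phi> q \<in> X" "0 < snd \<omega> p q"
      "snd \<omega> p q < d (\<phi> p) (\<phi> q)" "d (\<phi> p) (\<phi> q) / snd \<omega> p q \<le> lam"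
      using scaled_mor_ratio_witness t(3) assms(4) t(2) by blast
    with m_le[OF t(2)] show "ereal m \<le> t"
      using t(1) by force
  qed
  with assms(1) \<open>m > 1\<close> show False
    by (metis ereal_less_eq(3) linorder_not_less one_ereal_def order_trans)
qed

theorem mainTheorem4:
  fixes use_inj :: bool
    and \<Omega> :: "('b set \<times> ('b \<Rightarrow> 'b \<Rightarrow> real)) set"
    and X :: "'a set" and d :: "'a \<Rightarrow> 'a \<Rightarrow> real"
  assumes "finite \<Omega>"
    and "\<forall>\<omega>\<in>\<Omega>. fin_metric (fst \<omega>) (snd \<omega>)"
    and "fin_metric X d"
    and "x \<in> X" and "x' \<in> X"
  shows "clust_same_block use_inj \<Omega> X d x x' \<longleftrightarrow>
         chain_rel X (\<lambda>z z'. d_Omega use_inj \<Omega> X d z z' \<le> 1) x x'"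
    (is "_ \<longleftrightarrow> chain_rel X ?d_le_1 x x'")
proof -
  let ?linked = "omega_linked use_inj \<Omega> X d"
  have "finite X"
    using assms(3) unfolding fin_metric_def by blast
  have "(a, b) \<in> (restrict_rel X ?d_le_1)\<^sup>*" if "a \<in> X" "b \<in> X" "?linked a b" for a b
  proof -
    have "d_Omega use_inj \<Omega> X d a b \<le> max 0 (W_Omega use_inj \<Omega> X d a b)"
      using that(1,2) by (rule d_Omega_le_W_Omega)
    also have "\<dots> \<le> 1"
      using W_Omega_le_1_if_linked[OF that(3)] by simp
    finally show ?thesis
      using that(1,2) unfolding restrict_rel_def by auto
  qed
  moreover have "(a, b) \<in> (restrict_rel X ?linked)\<^sup>*" if "a \<in> X" "b \<in> X" "?d_le_1 a b" for a b
  proof -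
    have "chain_rel X (\<lambda>p q. W_Omega use_inj \<Omega> X d p q \<le> 1) a b"
      using that(3,1,2) \<open>finite X\<close> by (rule chain_rel_W_Omega_if_d_Omega_le)
    then have "chain_rel X ?linked a b"
    proof (rule chain_rel_rtrancl_mono)
      fix p q assume "p \<in> X" "q \<in> X" "W_Omega use_inj \<Omega> X d p q \<le> 1"
      then show "(p, q) \<in> (restrict_rel X ?linked)\<^sup>*"
        using linked_if_W_Omega_le_1[of use_inj \<Omega> X d p q] assms(1,2) \<open>finite X\<close>
        unfolding restrict_rel_def by (cases "p = q") auto
    qed
    then show ?thesis
      unfolding chain_rel_iff_rtrancl by simp
  qed
  ultimately show ?thesis
    unfolding clust_same_block_iff_chain_rel by (blast intro: chain_rel_rtrancl_mono)
qed

end
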